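(* Consider the Latex Particles Morphology Formation population balance system described in the context, with $a \in \mathbb{R}$, $0<b<1$ and $v_0=\lambda_{\mathrm{c}}>0$, and let $m,w$ be its solutions. Then the moments $M^0(t):=\int_0^\infty m(v,t)\,dv$ and $W^0(t):=\int_0^\infty w(v,t)\,dv$ are finite for all $t\in\mathbb{R}^+$, and $M^0(t)\le \lambda_{\mathrm{n}}\, t$ and $W^0(t)\le \frac{\lambda_{\mathrm{n}}\lambda_{\mathrm{m}}}{2}\,t^2$ for all $t\in\mathbb{R}^+$.
   Context: Fix real constants $a,b$ and positive constants $\lambda_{\mathrm{a}},\lambda_{\mathrm{c}},\lambda_{\mathrm{d}},\lambda_{\mathrm{m}},\lambda_{\mathrm{n}},\lambda_{\mathrm{p}},\lambda_{\mathrm{pol1}}$, $\bar\Psi>0$, $\Psi_r>0$, $\Phi_s\in(0,1)$. Set $v_0:=\lambda_{\mathrm{c}}$ and $\mu:=\lambda_{\mathrm{m}}$. The unknowns are densities $m(v,t), w(v,t)$ ($v,t\ge 0$) and scalar functions $V^{\mathrm{mat}}(t),V^{\mathrm{c_m}}(t),V^{\mathrm{c_w}}(t),\Psi(t),V_{\mathrm{pol2}}(t)$. Define $\alpha(v,u,t):=\tilde\alpha_0(t)[v^a+u^a]$, $\tilde\alpha_0(t):=\lambda_{\mathrm{a}}(\Psi(t)+1)^{14/3}$; $g(v,t):=\tilde\varrho_{\mathrm{d}}(t)v^b+\tilde\varrho_{\mathrm{p}}(t)v$, $\tilde\varrho_{\mathrm{p}}(t):=\lambda_{\mathrm{p}}\Psi(t)/V_p(t)$,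 $\tilde\varrho_{\mathrm{d}}(t):=\lambda_{\mathrm{d}}\Phi(t)(\Psi(t)+1)^{2/3}$; $n(v,t):=\tilde\eta_0(t)\delta(v-v_0)$ with $\tilde\eta_0(t):=\lambda_{\mathrm{n}}\Phi(t)$ and $\delta$ the Dirac delta; $\Phi(t):=\max\{V^{\mathrm{mat}}(t)/[(\Psi(t)+1)(V^{\mathrm{mat}}(t)+\lambda_{\mathrm{pol1}})]-\Phi_s,0\}$; $V_p(t):=(\Psi(t)+1)[V^{\mathrm{mat}}(t)+V^{\mathrm{c_m}}(t)+V^{\mathrm{c_w}}(t)+\lambda_{\mathrm{pol1}}]$; $\Sigma_y(t):=(\Psi(t)+1)^{2/3}\int_0^\infty v^b y(v,t)\,dv$ for $y=m,w$. The system is: for all $v,t>0$, $\partial_t m=-\partial_v(g m)+n-\mu m-m(v,t)\int_0^\infty\alpha(v,u,t)m(u,t)\,du+\tfrac12\int_0^v\alpha(v-u,u,t)m(v-u,t)m(u,t)\,du$, $\partial_t w=-\partial_v(g w)+\mu m-w(v,t)\int_0^\infty\alpha(v,u,t)w(u,t)\,du+\tfrac12\int_0^v\alpha(v-u,u,t)w(v-u,t)w(u,t)\,du$, with $m(v,0)=w(v,0)=0$, $m(0,t)=w(0,t)=0$; coupled to the ODEs $\dot V^{\mathrm{mat}}=\lambda_{\mathrm{p}}\frac{\Psi}{V_p}(V^{\mathrm{mat}}+\lambda_{\mathrm{pol1}})-\Phi[\lambda_{\mathrm{c}}\lambda_{\mathrm{n}}+\lambda_{\mathrm{d}}\Sigma_m+\lambda_{\mathrm{d}}\Sigma_w]$,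 $\dot V^{\mathrm{c_m}}=\lambda_{\mathrm{p}}\frac{\Psi}{V_p}V^{\mathrm{c_m}}+\Phi[\lambda_{\mathrm{c}}\lambda_{\mathrm{n}}+\lambda_{\mathrm{d}}\Sigma_m]-\lambda_{\mathrm{m}}V^{\mathrm{c_m}}$, $\dot V^{\mathrm{c_w}}=\lambda_{\mathrm{p}}\frac{\Psi}{V_p}V^{\mathrm{c_w}}+\lambda_{\mathrm{d}}\Phi\Sigma_w+\lambda_{\mathrm{m}}V^{\mathrm{c_m}}$, $\dot\Psi=-\lambda_{\mathrm{p}}\frac{\Psi}{\Psi+1}\frac{\Psi+\Psi_r}{V_{\mathrm{pol2}}+\lambda_{\mathrm{pol1}}}$, $\dot V_{\mathrm{pol2}}=\lambda_{\mathrm{p}}\frac{\Psi}{\Psi+1}$, with $V^{\mathrm{mat}}(0)=V^{\mathrm{c_m}}(0)=V^{\mathrm{c_w}}(0)=V_{\mathrm{pol2}}(0)=0$, $\Psi(0)=\bar\Psi$. Solutions $m,w$ are understood to be non-negative functions. The constant $\lambda_{\mathrm{n}}$ is the upper bound of $\tilde\eta_0(t)$ (denoted $\kappa_{\mathrm{n}}$ in the paper). *)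

theory Defs
  imports "HOL-Analysis.Analysis"
begin

record lpmf_params =
  pa :: real
  pb :: real
  la :: real
  lc :: real        (* lambda_c = v_0 *)
  ld :: real
  lm :: real
  ln :: real
  lp :: real
  lpol1 :: real
  Psibar :: real
  Psir :: real
  Phis :: real

type_synonym density = "real \<Rightarrow> real \<Rightarrow> real"   (* y v t *)

definition Phi_f :: "lpmf_params \<Rightarrow> (real \<Rightarrow> real) \<Rightarrow> (real \<Rightarrow> real) \<Rightarrow> real \<Rightarrow> real" where
  "Phi_f P Vmat Psi t =
     max (Vmat t / ((Psi t + 1) * (Vmat t + lpol1 P)) - Phis P) 0"

definition Vp_f :: "lpmf_params \<Rightarrow> (real \<Rightarrow> real) \<Rightarrow> (real \<Rightarrow> real) \<Rightarrow> (real \<Rightarrow> real)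
    \<Rightarrow> (real \<Rightarrow> real) \<Rightarrow> real \<Rightarrow> real" where
  "Vp_f P Vmat Vcm Vcw Psi t = (Psi t + 1) * (Vmat t + Vcm t + Vcw t + lpol1 P)"

definition alpha_f :: "lpmf_params \<Rightarrow> (real \<Rightarrow> real) \<Rightarrow> real \<Rightarrow> real \<Rightarrow> real \<Rightarrow> real" where
  "alpha_f P Psi v u t = la P * (Psi t + 1) powr (14/3) * (v powr pa P + u powr pa P)"

definition g_f :: "lpmf_params \<Rightarrow> (real \<Rightarrow> real) \<Rightarrow> (real \<Rightarrow> real) \<Rightarrow> (real \<Rightarrow> real)
    \<Rightarrow> (real \<Rightarrow> real) \<Rightarrow> real \<Rightarrow> real \<Rightarrow> real" where
  "g_f P Vmat Vcm Vcw Psi v t =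
     ld P * Phi_f P Vmat Psi t * (Psi t + 1) powr (2/3) * v powr pb P
     + lp P * Psi t / Vp_f P Vmat Vcm Vcw Psi t * v"

definition eta0_f :: "lpmf_params \<Rightarrow> (real \<Rightarrow> real) \<Rightarrow> (real \<Rightarrow> real) \<Rightarrow> real \<Rightarrow> real" where
  "eta0_f P Vmat Psi t = ln P * Phi_f P Vmat Psi t"

definition Sigma_f :: "lpmf_params \<Rightarrow> (real \<Rightarrow> real) \<Rightarrow> density \<Rightarrow> real \<Rightarrow> real" where
  "Sigma_f P Psi y t =
     (Psi t + 1) powr (2/3) * set_lebesgue_integral lborel {0<..} (\<lambda>v. v powr pb P * y v t)"

definition test_fun :: "(real \<Rightarrow> real) \<Rightarrow> bool" where
  "test_fun \<phi> \<longleftrightarrow> (\<forall>v. (\<phi> has_real_derivative deriv \<phi> v) (at v))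
      \<and> continuous_on UNIV (deriv \<phi>) \<and> (\<exists>R. \<forall>v\<ge>R. \<phi> v = 0)"

definition coag_weak :: "lpmf_params \<Rightarrow> (real \<Rightarrow> real) \<Rightarrow> density \<Rightarrow> (real \<Rightarrow> real) \<Rightarrow> real \<Rightarrow> real" where
  "coag_weak P Psi y \<phi> t =
     - set_lebesgue_integral (lborel \<Otimes>\<^sub>M lborel) ({0<..} \<times> {0<..})
         (\<lambda>(v,u). alpha_f P Psi v u t * y v t * y u t * \<phi> v)
     + 1/2 * set_lebesgue_integral (lborel \<Otimes>\<^sub>M lborel) ({0<..} \<times> {0<..})
         (\<lambda>(v,u). alpha_f P Psi v u t * y v t * y u t * \<phi> (v + u))"

definition admissible_density :: "lpmf_params \<Rightarrow> (real \<Rightarrow> real) \<Rightarrow> density \<Rightarrow> bool" where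
  "admissible_density P Psi y \<longleftrightarrow>
     (\<forall>v t. 0 \<le> v \<longrightarrow> 0 \<le> t \<longrightarrow> 0 \<le> y v t)
   \<and> (\<forall>v\<ge>0. y v 0 = 0) \<and> (\<forall>t\<ge>0. y 0 t = 0)
   \<and> (\<forall>t\<ge>0. \<forall>R>0. set_integrable lborel {0<..R} (\<lambda>v. y v t))
   \<and> (\<forall>t\<ge>0. set_integrable lborel {0<..} (\<lambda>v. v powr pb P * y v t))
   \<and> (\<forall>t\<ge>0. \<forall>R>0. set_integrable (lborel \<Otimes>\<^sub>M lborel) ({0<..R} \<times> {0<..})
          (\<lambda>(v,u). alpha_f P Psi v u t * y v t * y u t))"

text \<open>Solution of the LPMF system: the two population balance equations hold in the
  weak sense (tested against test functions; the Dirac source n = eta0 delta(v - v0)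
  contributes eta0(t) phi(v0)), and the ODEs hold classically on t >= 0.\<close>
definition lpmf_solution :: "lpmf_params \<Rightarrow> density \<Rightarrow> density \<Rightarrow> (real \<Rightarrow> real) \<Rightarrow> (real \<Rightarrow> real)
    \<Rightarrow> (real \<Rightarrow> real) \<Rightarrow> (real \<Rightarrow> real) \<Rightarrow> (real \<Rightarrow> real) \<Rightarrow> bool" where
  "lpmf_solution P m w Vmat Vcm Vcw Psi Vpol2 \<longleftrightarrow>
     admissible_density P Psi m \<and> admissible_density P Psi w
   \<and> (\<forall>\<phi>. test_fun \<phi> \<longrightarrow> (\<forall>t\<ge>0.
        ((\<lambda>s. set_lebesgue_integral lborel {0<..} (\<lambda>v. \<phi> v * m v s)) has_real_derivative
           (set_lebesgue_integral lborel {0<..}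
               (\<lambda>v. g_f P Vmat Vcm Vcw Psi v t * deriv \<phi> v * m v t)
            + eta0_f P Vmat Psi t * \<phi> (lc P)
            - lm P * set_lebesgue_integral lborel {0<..} (\<lambda>v. \<phi> v * m v t)
            + coag_weak P Psi m \<phi> t)) (at t within {0..})))
   \<and> (\<forall>\<phi>. test_fun \<phi> \<longrightarrow> (\<forall>t\<ge>0.
        ((\<lambda>s. set_lebesgue_integral lborel {0<..} (\<lambda>v. \<phi> v * w v s)) has_real_derivative
           (set_lebesgue_integral lborel {0<..}
               (\<lambda>v. g_f P Vmat Vcm Vcw Psi v t * deriv \<phi> v * w v t)
            + lm P * set_lebesgue_integral lborel {0<..} (\<lambda>v. \<phi> v * m v t)
            + coag_weak P Psi w \<phi> t)) (at t within {0..})))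
   \<and> (\<forall>t\<ge>0. (Vmat has_real_derivative
          (lp P * Psi t / Vp_f P Vmat Vcm Vcw Psi t * (Vmat t + lpol1 P)
           - Phi_f P Vmat Psi t * (lc P * ln P + ld P * Sigma_f P Psi m t
                                   + ld P * Sigma_f P Psi w t))) (at t within {0..}))
   \<and> (\<forall>t\<ge>0. (Vcm has_real_derivative
          (lp P * Psi t / Vp_f P Vmat Vcm Vcw Psi t * Vcm t
           + Phi_f P Vmat Psi t * (lc P * ln P + ld P * Sigma_f P Psi m t)
           - lm P * Vcm t)) (at t within {0..}))
   \<and> (\<forall>t\<ge>0. (Vcw has_real_derivative
          (lp P * Psi t / Vp_f P Vmat Vcm Vcw Psi t * Vcw t
           + ld P * Phi_f P Vmat Psi t * Sigma_f P Psi w t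
           + lm P * Vcm t)) (at t within {0..}))
   \<and> (\<forall>t\<ge>0. (Psi has_real_derivative
          (- lp P * (Psi t / (Psi t + 1)) * ((Psi t + Psir P) / (Vpol2 t + lpol1 P))))
          (at t within {0..}))
   \<and> (\<forall>t\<ge>0. (Vpol2 has_real_derivative (lp P * (Psi t / (Psi t + 1)))) (at t within {0..}))
   \<and> Vmat 0 = 0 \<and> Vcm 0 = 0 \<and> Vcw 0 = 0 \<and> Vpol2 0 = 0 \<and> Psi 0 = Psibar P"

definition lpmf_constants_ok :: "lpmf_params \<Rightarrow> bool" where
  "lpmf_constants_ok P \<longleftrightarrow> 0 < pb P \<and> pb P < 1
     \<and> 0 < la P \<and> 0 < lc P \<and> 0 < ld P \<and> 0 < lm P \<and> 0 < ln P \<and> 0 < lp P \<and> 0 < lpol1 P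
     \<and> 0 < Psibar P \<and> 0 < Psir P \<and> 0 < Phis P \<and> Phis P < 1"

end

theory Submission
  imports Defs
begin

(* Test the weak equations against C^1 cutoffs that equal 1 up to R, vanish beyond R + 1 and
   are nonincreasing.  The ODE part keeps Psi > 0, Vmat >= 0 and 0 <= Phi <= 1, so the growth
   rate g is nonnegative; as the cutoff is nonincreasing, growth and coagulation (which moves
   mass to larger volumes) cannot increase the cutoff moments.  Hence the cutoff moment of m grows
   at most at the rate lambda_n of the nucleation source, and that of w at most at the rate
   mu times the cutoff moment of m, i.e. mu lambda_n t.  Integrating from the zero initial data
   and letting R tend to infinity by dominated convergence gives the bounds; integrability of
   m and w comes from that of v^b m on ]0, oo[ and of m on ]0, 1]. *)

lemma continuous_on_from_DERIV_within:
  fixes f :: "real \<Rightarrow> real"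
  assumes "\<forall>t\<ge>0. (f has_real_derivative f' t) (at t within {0..})"
  shows "continuous_on {0..} f"
  unfolding continuous_on_eq_continuous_within using assms by (auto intro: DERIV_continuous)

lemma DERIV_within_nonneg_imp_increasing:
  fixes f :: "real \<Rightarrow> real"
  assumes der: "\<forall>t\<ge>0. (f has_real_derivative f' t) (at t within {0..})"
    and "0 \<le> a" "a \<le> b" and nonneg: "\<And>t. a < t \<Longrightarrow> t < b \<Longrightarrow> 0 \<le> f' t"
  shows "f a \<le> f b"
proof (rule DERIV_nonneg_imp_increasing_open[OF \<open>a \<le> b\<close>])
  fix t assume "a < t" "t < b"
  with \<open>0 \<le> a\<close> have "at t within {0..} = at t"
    by (intro at_within_interior) auto
  with der[rule_format, of t] nonneg[of t] \<open>a < t\<close> \<open>t < b\<close> \<open>0 \<le> a\<close>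
  show "\<exists>y. (f has_real_derivative y) (at t) \<and> 0 \<le> y" by auto
next
  have "continuous_on {0..} f"
    by (rule continuous_on_from_DERIV_within[OF der])
  then show "continuous_on {a..b} f"
    by (rule continuous_on_subset) (use \<open>0 \<le> a\<close> in auto)
qed

lemma DERIV_within_le_imp_le:
  fixes f g :: "real \<Rightarrow> real"
  assumes "\<forall>t\<ge>0. (f has_real_derivative f' t) (at t within {0..})"
    and "\<forall>t\<ge>0. (g has_real_derivative g' t) (at t within {0..})"
    and "0 \<le> a" "a \<le> b" "\<And>t. a < t \<Longrightarrow> t < b \<Longrightarrow> f' t \<le> g' t" "f a \<le> g a"
  shows "f b \<le> g b"
proof -
  have "g a - f a \<le> g b - f b"
    by (rule DERIV_within_nonneg_imp_increasing[where f' = "\<lambda>t. g' t - f' t"])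
       (use assms in \<open>auto intro: DERIV_diff\<close>)
  with assms(6) show ?thesis by simp
qed

lemma first_hitting_time:
  fixes f :: "real \<Rightarrow> real"
  assumes cont: "continuous_on {a..b} f" and "a \<le> b" "c < f a" "f b \<le> c"
  obtains t where "a \<le> t" "t \<le> b" "f t \<le> c" "\<And>s. a \<le> s \<Longrightarrow> s < t \<Longrightarrow> c < f s"
proof -
  define Z where "Z = {a..b} \<inter> f -` {..c}"
  have "closed Z"
    unfolding Z_def by (rule continuous_closed_preimage) (use cont in auto)
  moreover have "b \<in> Z" "bdd_below Z"
    using assms by (auto simp: Z_def bdd_below_def)
  ultimately have "Inf Z \<in> Z" using closed_contains_Inf by blast
  moreover have "c < f s" if "a \<le> s" "s < Inf Z" for s
    using cInf_lower[of s Z] \<open>bdd_below Z\<close> \<open>Inf Z \<in> Z\<close> that by (force simp: Z_def)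
  ultimately show thesis by (intro that[of "Inf Z"]) (auto simp: Z_def)
qed

lemma last_hitting_time:
  fixes f :: "real \<Rightarrow> real"
  assumes cont: "continuous_on {a..b} f" and "a \<le> b" "c \<le> f a" "f b < c"
  obtains t where "a \<le> t" "t \<le> b" "c \<le> f t" "\<And>s. t < s \<Longrightarrow> s \<le> b \<Longrightarrow> f s < c"
proof -
  define Z where "Z = {a..b} \<inter> f -` {c..}"
  have "closed Z"
    unfolding Z_def by (rule continuous_closed_preimage) (use cont in auto)
  moreover have "a \<in> Z" "bdd_above Z"
    using assms by (auto simp: Z_def bdd_above_def)
  ultimately have "Sup Z \<in> Z" using closed_contains_Sup by blast
  moreover have "f s < c" if "Sup Z < s" "s \<le> b" for s
    using cSup_upper[of s Z] \<open>bdd_above Z\<close> \<open>Sup Z \<in> Z\<close> that by (force simp: Z_def)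
  ultimately show thesis by (intro that[of "Sup Z"]) (auto simp: Z_def)
qed

lemma DERIV_within_barrier_nonneg:
  fixes f :: "real \<Rightarrow> real"
  assumes der: "\<forall>t\<ge>0. (f has_real_derivative f' t) (at t within {0..})"
    and "0 < c" "0 \<le> f 0"
    and barrier: "\<And>t. 0 < t \<Longrightarrow> - c < f t \<Longrightarrow> f t < 0 \<Longrightarrow> 0 \<le> f' t"
    and "0 \<le> T"
  shows "0 \<le> f T"
proof (rule ccontr)
  assume "\<not> 0 \<le> f T"
  have cont: "continuous_on {0..x} f" for x
    by (rule continuous_on_subset[OF continuous_on_from_DERIV_within[of f f']]) (use der in auto)
  define d where "d = max (f T) (- c / 2)"
  have d: "- c < d" "d < 0"
    using \<open>0 < c\<close> \<open>\<not> 0 \<le> f T\<close> by (auto simp: d_def)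
  obtain t1 where t1: "0 \<le> t1" "f t1 \<le> d" and above: "\<And>s. 0 \<le> s \<Longrightarrow> s < t1 \<Longrightarrow> d < f s"
    by (rule first_hitting_time[OF cont \<open>0 \<le> T\<close>, of d]) (use d \<open>0 \<le> f 0\<close> in \<open>auto simp: d_def\<close>)
  obtain t0 where t0: "0 \<le> t0" "t0 \<le> t1" "0 \<le> f t0" and below: "\<And>s. t0 < s \<Longrightarrow> s \<le> t1 \<Longrightarrow> f s < 0"
    by (rule last_hitting_time[OF cont \<open>0 \<le> t1\<close>, of 0]) (use d t1 \<open>0 \<le> f 0\<close> in auto)
  have "f t0 \<le> f t1"
  proof (rule DERIV_within_nonneg_imp_increasing[where f' = f', OF _ t0(1,2)])
    show "0 \<le> f' t" if "t0 < t" "t < t1" for t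
      using above[of t] below[of t] d t0 that by (intro barrier) auto
  qed (rule der)
  with t0 t1 d show False by simp
qed

text \<open>As long as \<open>\<Psi> > 0\<close>, \<open>V\<close> grows and \<open>\<Psi>\<close> decays, so the relative decay rate of \<open>\<Psi>\<close>
  stays below \<open>K = k (\<Psi>(0) + r) / l\<close> and \<open>\<Psi>(t) e\<^sup>K\<^sup>t\<close> is nondecreasing.\<close>
lemma ODE_decay_stays_pos:
  fixes \<Psi> V :: "real \<Rightarrow> real"
  assumes d\<Psi>: "\<forall>t\<ge>0. (\<Psi> has_real_derivative
          - k * (\<Psi> t / (\<Psi> t + 1)) * ((\<Psi> t + r) / (V t + l))) (at t within {0..})"
    and dV: "\<forall>t\<ge>0. (V has_real_derivative k * (\<Psi> t / (\<Psi> t + 1))) (at t within {0..})"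
    and "0 < k" "0 < r" "0 < l" "0 < \<Psi> 0" "V 0 = 0" "0 \<le> T"
  shows "0 < \<Psi> T"
proof (rule ccontr)
  assume "\<not> 0 < \<Psi> T"
  have "continuous_on {0..T} \<Psi>"
    by (rule continuous_on_subset[OF continuous_on_from_DERIV_within[of \<Psi>]]) (use d\<Psi> in auto)
  then obtain t1 where t1: "0 \<le> t1" "\<Psi> t1 \<le> 0" and pos: "\<And>s. 0 \<le> s \<Longrightarrow> s < t1 \<Longrightarrow> 0 < \<Psi> s"
    by (rule first_hitting_time) (use assms \<open>\<not> 0 < \<Psi> T\<close> in auto)
  have V_nonneg: "0 \<le> V s" if "0 \<le> s" "s < t1" for s
  proof -
    have "V 0 \<le> V s"
    proof (rule DERIV_within_nonneg_imp_increasing[OF dV order_refl \<open>0 \<le> s\<close>])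
      show "0 \<le> k * (\<Psi> t / (\<Psi> t + 1))" if "0 < t" "t < s" for t
        using pos[of t] that \<open>s < t1\<close> \<open>0 < k\<close> by simp
    qed
    with \<open>V 0 = 0\<close> show ?thesis by simp
  qed
  have \<Psi>_le: "\<Psi> s \<le> \<Psi> 0" if "0 \<le> s" "s < t1" for s
  proof (rule DERIV_within_le_imp_le[where g = "\<lambda>_. \<Psi> 0" and g' = "\<lambda>_. 0",
        OF d\<Psi> _ order_refl \<open>0 \<le> s\<close>])
    show "- k * (\<Psi> t / (\<Psi> t + 1)) * ((\<Psi> t + r) / (V t + l)) \<le> 0" if "0 < t" "t < s" for t
      using pos[of t] V_nonneg[of t] that \<open>s < t1\<close> assms(3-5)
      by (intro mult_nonpos_nonneg) auto
  qed auto
  define K where "K = k * (\<Psi> 0 + r) / l"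
  have rate: "k * (\<Psi> s + r) / ((\<Psi> s + 1) * (V s + l)) \<le> K" if "0 \<le> s" "s < t1" for s
  proof -
    have "1 * l \<le> (\<Psi> s + 1) * (V s + l)"
      using pos[OF that] V_nonneg[OF that] \<open>0 < l\<close> by (intro mult_mono) auto
    then show ?thesis
      unfolding K_def using \<Psi>_le[OF that] pos[OF that] assms
      by (intro frac_le) auto
  qed
  have dq: "((\<lambda>t. \<Psi> t * exp (K * t)) has_real_derivative
      exp (K * t) * \<Psi> t * (K - k * (\<Psi> t + r) / ((\<Psi> t + 1) * (V t + l)))) (at t within {0..})"
    if "0 \<le> t" for t
    using d\<Psi> that by (auto intro!: derivative_eq_intros simp: field_simps)
  have "\<Psi> 0 * exp (K * 0) \<le> \<Psi> t1 * exp (K * t1)"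
  proof (rule DERIV_within_nonneg_imp_increasing[OF _ order_refl \<open>0 \<le> t1\<close>])
    show "0 \<le> exp (K * t) * \<Psi> t * (K - k * (\<Psi> t + r) / ((\<Psi> t + 1) * (V t + l)))"
      if "0 < t" "t < t1" for t
      using pos[of t] rate[of t] that by simp
  qed (use dq in blast)
  moreover have "\<Psi> t1 * exp (K * t1) \<le> 0"
    using t1 by (simp add: mult_nonpos_nonneg)
  ultimately show False
    using \<open>0 < \<Psi> 0\<close> by simp
qed

definition pos_sq :: "real \<Rightarrow> real" where
  "pos_sq x = (max 0 x)\<^sup>2"

lemma pos_sq_has_real_derivative: "(pos_sq has_real_derivative 2 * max 0 x) (at x)"
proof -
  have "((\<lambda>x. if x \<in> {..0} then 0 else x\<^sup>2) has_derivative
      (if x \<in> {..0} then (\<lambda>h. 0) else (\<lambda>h. 2 * x * h))) (at x within ({..0} \<union> {0<..}))"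
    by (rule has_derivative_If_within_closures) (auto intro!: derivative_eq_intros)
  moreover have "{..0} \<union> {0<..} = (UNIV :: real set)"
    by auto
  moreover have "(\<lambda>x. if x \<in> {..0} then 0 else x\<^sup>2) = pos_sq"
    by (auto simp: pos_sq_def max_def)
  ultimately show ?thesis
    unfolding has_field_derivative_def
    by (auto elim!: has_derivative_eq_rhs simp: fun_eq_iff max_def)
qed

text \<open>A \<open>C\<^sup>1\<close> piecewise quadratic step from \<open>1\<close> (for \<open>v \<le> R\<close>) down to \<open>0\<close> (for \<open>v \<ge> R + 1\<close>).\<close>
definition cutoff :: "real \<Rightarrow> real \<Rightarrow> real" where
  "cutoff R v = 1 - 2 * pos_sq (v - R) + 4 * pos_sq (v - R - 1/2) - 2 * pos_sq (v - R - 1)"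

definition dcutoff :: "real \<Rightarrow> real \<Rightarrow> real" where
  "dcutoff R v = - 4 * max 0 (v - R) + 8 * max 0 (v - R - 1/2) - 4 * max 0 (v - R - 1)"

lemma cutoff_has_real_derivative: "(cutoff R has_real_derivative dcutoff R v) (at v)"
proof -
  have shifted: "((\<lambda>v. pos_sq (v - c)) has_real_derivative 2 * max 0 (v - c)) (at v)" for c
    using DERIV_chain2[OF pos_sq_has_real_derivative DERIV_diff[OF DERIV_ident DERIV_const]]
    by simp
  have "(cutoff R has_real_derivative 0 - 2 * (2 * max 0 (v - R))
      + 4 * (2 * max 0 (v - (R + 1/2))) - 2 * (2 * max 0 (v - (R + 1)))) (at v)"
    unfolding cutoff_def[abs_def] diff_diff_eq
    by (intro DERIV_diff DERIV_add DERIV_cmult shifted DERIV_const)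
  then show ?thesis
    by (simp add: dcutoff_def diff_diff_eq)
qed

lemma deriv_cutoff: "deriv (cutoff R) = dcutoff R"
  using cutoff_has_real_derivative DERIV_imp_deriv by blast

lemma cutoff_eq_1: "v \<le> R \<Longrightarrow> cutoff R v = 1"
  by (simp add: cutoff_def pos_sq_def)

lemma cutoff_eq_0: "R + 1 \<le> v \<Longrightarrow> cutoff R v = 0"
  by (simp add: cutoff_def pos_sq_def power2_eq_square algebra_simps)

lemma test_fun_cutoff: "test_fun (cutoff R)"
  unfolding test_fun_def deriv_cutoff
proof (intro conjI allI)
  show "continuous_on UNIV (dcutoff R)"
    unfolding dcutoff_def by (intro continuous_intros)
qed (use cutoff_has_real_derivative cutoff_eq_0 in blast)+

lemma dcutoff_nonpos: "dcutoff R v \<le> 0"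
  by (simp add: dcutoff_def max_def)

lemma antimono_cutoff: "antimono (cutoff R)"
proof (rule antimonoI)
  fix v u :: real assume "v \<le> u"
  then show "cutoff R u \<le> cutoff R v"
    by (rule DERIV_nonpos_imp_nonincreasing) (auto intro: cutoff_has_real_derivative dcutoff_nonpos)
qed

lemma cutoff_nonneg: "0 \<le> cutoff R v"
  using antimonoD[OF antimono_cutoff[of R], of v "max v (R + 1)"] cutoff_eq_0[of R "max v (R + 1)"]
  by simp

lemma cutoff_le_1: "cutoff R v \<le> 1"
  using antimonoD[OF antimono_cutoff[of R], of "min v R" v] cutoff_eq_1[of "min v R" R]
  by simp

lemma borel_measurable_antimono:
  fixes f :: "real \<Rightarrow> real"
  shows "antimono f \<Longrightarrow> f \<in> borel_measurable borel"
  using borel_measurable_mono[of "\<lambda>x. - f x"] by (simp add: mono_def antimono_def)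

lemma borel_measurable_cutoff [measurable]: "cutoff R \<in> borel_measurable borel"
  by (rule borel_measurable_antimono[OF antimono_cutoff])

lemma set_integral_nonneg:
  fixes f :: "'a \<Rightarrow> real"
  assumes "\<And>x. x \<in> A \<Longrightarrow> 0 \<le> f x"
  shows "0 \<le> (LINT x:A|M. f x)"
  unfolding set_lebesgue_integral_def
  by (intro integral_nonneg_AE AE_I2) (simp add: assms split: split_indicator)

lemma set_integral_nonpos:
  fixes f :: "'a \<Rightarrow> real"
  assumes "\<And>x. x \<in> A \<Longrightarrow> f x \<le> 0"
  shows "(LINT x:A|M. f x) \<le> 0"
proof -
  have "0 \<le> - (LINT x:A|M. f x)"
    using set_integral_nonneg[of A "\<lambda>x. - f x" M] assms
    unfolding set_lebesgue_integral_def by simp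
  then show ?thesis by simp
qed

lemma set_integrable_Ioi_of_powr_moment:
  fixes f :: "real \<Rightarrow> real"
  assumes "0 \<le> b"
    and near_0: "set_integrable lborel {0<..1} f"
    and moment: "set_integrable lborel {0<..} (\<lambda>v. v powr b * f v)"
  shows "set_integrable lborel {0<..} f"
proof -
  let ?f0 = "\<lambda>v. indicator {0<..1} v * f v" and ?fb = "\<lambda>v. indicator {0<..} v * (v powr b * f v)"
  have int: "integrable lborel ?f0" "integrable lborel ?fb"
    using near_0 moment by (simp_all add: set_integrable_def)
  have [measurable]: "?f0 \<in> borel_measurable lborel" "?fb \<in> borel_measurable lborel"
    using int by (auto intro: borel_measurable_integrable)
  have split: "indicator {0<..} v * f v = ?f0 v + indicator {1<..} v * v powr (- b) * ?fb v" for v :: real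
    by (cases "1 < v") (auto simp: indicator_def powr_minus field_simps)
  have "integrable lborel (\<lambda>v. indicator {0<..} v * f v)"
  proof (rule Bochner_Integration.integrable_bound
      [OF Bochner_Integration.integrable_add[OF integrable_norm[OF int(1)] integrable_norm[OF int(2)]]])
    show "(\<lambda>v. indicator {0<..} v * f v) \<in> borel_measurable lborel"
      unfolding split by measurable
    have "\<bar>f v\<bar> \<le> \<bar>v powr b * f v\<bar>" if "1 < v" for v :: real
      using that \<open>0 \<le> b\<close> ge_one_powr_ge_zero[of v b] by (simp add: abs_mult mult_le_cancel_right1)
    then show "AE v in lborel. norm (indicator {0<..} v * f v) \<le> norm (norm (?f0 v) + norm (?fb v))"
      by (intro AE_I2) (auto simp: indicator_def)
  qed
  then show ?thesis
    by (simp add: set_integrable_def)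
qed

lemma set_integral_le_of_cutoff_bound:
  fixes f :: "real \<Rightarrow> real"
  assumes int: "set_integrable lborel {0<..} f"
    and bound: "\<And>R. 0 < R \<Longrightarrow> (LINT v:{0<..}|lborel. cutoff R v * f v) \<le> C"
  shows "(LINT v:{0<..}|lborel. f v) \<le> C"
proof -
  let ?F = "\<lambda>v. indicator {0<..} v * f v"
  have "integrable lborel ?F"
    using int by (simp add: set_integrable_def)
  then have [measurable]: "?F \<in> borel_measurable lborel"
    by (rule borel_measurable_integrable)
  have "((\<lambda>R. integral\<^sup>L lborel (\<lambda>v. cutoff R v * ?F v)) \<longlongrightarrow> integral\<^sup>L lborel ?F) at_top"
  proof (rule integral_dominated_convergence_at_top[where w = "\<lambda>v. norm (?F v)"])
    show "AE v in lborel. ((\<lambda>R. cutoff R v * ?F v) \<longlongrightarrow> ?F v) at_top"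
    proof (rule AE_I2)
      fix v :: real
      have "\<forall>\<^sub>F R in at_top. cutoff R v * ?F v = ?F v"
        by (rule eventually_at_top_linorderI[of v]) (simp add: cutoff_eq_1)
      then show "((\<lambda>R. cutoff R v * ?F v) \<longlongrightarrow> ?F v) at_top"
        by (rule tendsto_eventually)
    qed
    show "\<forall>\<^sub>F R in at_top. AE v in lborel. norm (cutoff R v * ?F v) \<le> norm (?F v)"
      using cutoff_nonneg cutoff_le_1
      by (intro always_eventually allI AE_I2) (simp add: abs_mult mult_left_le_one_le)
  qed (use \<open>integrable lborel ?F\<close> in auto)
  then have "integral\<^sup>L lborel ?F \<le> C"
  proof (rule tendsto_upperbound)
    show "\<forall>\<^sub>F R in at_top. integral\<^sup>L lborel (\<lambda>v. cutoff R v * ?F v) \<le> C"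
      using bound by (intro eventually_at_top_linorderI[of 1]) (simp add: set_lebesgue_integral_def mult_ac)
  qed simp
  then show ?thesis
    by (simp add: set_lebesgue_integral_def)
qed

lemma alpha_nonneg: "0 < la P \<Longrightarrow> 0 \<le> alpha_f P Psi v u t"
  unfolding alpha_f_def by (intro mult_nonneg_nonneg add_nonneg_nonneg) auto

text \<open>Coagulation moves mass to larger volumes; against a nonincreasing nonnegative test function
  the gain term \<open>\<phi>(v + u) \<le> \<phi>(v)\<close> is dominated by the loss term.\<close>
lemma coag_weak_nonpos:
  fixes y :: density and \<phi> :: "real \<Rightarrow> real"
  assumes "0 < la P" and y_nonneg: "\<And>v. 0 < v \<Longrightarrow> 0 \<le> y v t"
    and int: "set_integrable (lborel \<Otimes>\<^sub>M lborel) ({0<..R} \<times> {0<..})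
                (\<lambda>(v, u). alpha_f P Psi v u t * y v t * y u t)"
    and "antimono \<phi>" and \<phi>_nonneg: "\<And>v. 0 \<le> \<phi> v" and \<phi>_vanish: "\<And>v. R < v \<Longrightarrow> \<phi> v = 0"
  shows "coag_weak P Psi y \<phi> t \<le> 0"
proof -
  let ?M = "lborel \<Otimes>\<^sub>M lborel :: (real \<times> real) measure"
  let ?A = "{0<..} \<times> {0<..} :: (real \<times> real) set"
  define F where "F = (\<lambda>(v, u). alpha_f P Psi v u t * y v t * y u t)"
  define loss where "loss x = indicator ?A x * (F x * \<phi> (fst x))" for x
  define gain where "gain x = indicator ?A x * (F x * \<phi> (fst x + snd x))" for x
  have coag: "coag_weak P Psi y \<phi> t = - integral\<^sup>L ?M loss + 1/2 * integral\<^sup>L ?M gain"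
    unfolding coag_weak_def set_lebesgue_integral_def loss_def gain_def F_def
    by (simp add: case_prod_beta)
  have F_nonneg: "0 \<le> F x" if "x \<in> ?A" for x
    using that alpha_nonneg[OF \<open>0 < la P\<close>] y_nonneg by (auto simp: F_def)
  have [measurable]: "\<phi> \<in> borel_measurable borel"
    using \<open>antimono \<phi>\<close> by (rule borel_measurable_antimono)
  define h where "h x = indicator ({0<..R} \<times> {0<..}) x * F x" for x
  have "integrable ?M h"
    using int unfolding set_integrable_def h_def[abs_def] F_def by simp
  then have [measurable]: "h \<in> borel_measurable ?M"
    by (rule borel_measurable_integrable)
  have loss_eq: "loss x = \<phi> (fst x) * h x" for x
    using \<phi>_vanish[of "fst x"] by (cases "R < fst x") (auto simp: loss_def h_def indicator_def)
  have "integrable ?M loss"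
  proof (rule Bochner_Integration.integrable_bound)
    show "integrable ?M (\<lambda>x. \<phi> 0 * norm (h x))"
      using \<open>integrable ?M h\<close> by auto
    show "loss \<in> borel_measurable ?M"
      unfolding loss_eq[abs_def] by measurable
    have "norm (loss x) \<le> norm (\<phi> 0 * norm (h x))" for x
    proof (cases "x \<in> ?A")
      case True
      then have "\<phi> (fst x) \<le> \<phi> 0"
        using antimonoD[OF \<open>antimono \<phi>\<close>, of 0 "fst x"] by auto
      then show ?thesis
        using \<phi>_nonneg[of 0] \<phi>_nonneg[of "fst x"]
        by (simp add: loss_eq abs_mult mult_right_mono)
    qed (simp add: loss_def)
    then show "AE x in ?M. norm (loss x) \<le> norm (\<phi> 0 * norm (h x))"
      by simp
  qed
  moreover have "gain x \<le> loss x \<and> 0 \<le> loss x" for x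
  proof (cases "x \<in> ?A")
    case True
    then have "\<phi> (fst x + snd x) \<le> \<phi> (fst x)"
      using antimonoD[OF \<open>antimono \<phi>\<close>, of "fst x" "fst x + snd x"] by auto
    then show ?thesis
      using True F_nonneg[OF True] \<phi>_nonneg[of "fst x"]
      by (simp add: gain_def loss_def mult_left_mono)
  qed (simp add: gain_def loss_def)
  ultimately have "integral\<^sup>L ?M gain \<le> integral\<^sup>L ?M loss" "0 \<le> integral\<^sup>L ?M loss"
    by (auto intro: integral_mono' integral_nonneg_AE)
  then show ?thesis
    unfolding coag by simp
qed

lemma admissible_density_nonneg:
  "admissible_density P Psi y \<Longrightarrow> 0 \<le> v \<Longrightarrow> 0 \<le> t \<Longrightarrow> 0 \<le> y v t"
  unfolding admissible_density_def by blast

lemma set_integrable_admissible_density: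
  assumes "admissible_density P Psi y" "0 \<le> pb P" "0 \<le> t"
  shows "set_integrable lborel {0<..} (\<lambda>v. y v t)"
proof (rule set_integrable_Ioi_of_powr_moment[OF assms(2)])
  show "set_integrable lborel {0<..1} (\<lambda>v. y v t)"
    using assms(1,3) unfolding admissible_density_def by simp
  show "set_integrable lborel {0<..} (\<lambda>v. v powr pb P * y v t)"
    using assms(1,3) unfolding admissible_density_def by simp
qed

lemma coag_weak_cutoff_nonpos:
  assumes "admissible_density P Psi y" "0 < la P" "0 \<le> t" "0 < R"
  shows "coag_weak P Psi y (cutoff R) t \<le> 0"
proof (rule coag_weak_nonpos[where R = "R + 1"])
  show "set_integrable (lborel \<Otimes>\<^sub>M lborel) ({0<..R + 1} \<times> {0<..})
      (\<lambda>(v, u). alpha_f P Psi v u t * y v t * y u t)"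
    using assms unfolding admissible_density_def by simp
  show "0 \<le> y v t" if "0 < v" for v
    using admissible_density_nonneg[OF assms(1)] assms(3) that by simp
  show "cutoff R v = 0" if "R + 1 < v" for v
    using that by (simp add: cutoff_eq_0)
qed (use assms antimono_cutoff cutoff_nonneg in simp_all)

definition cutoff_moment :: "real \<Rightarrow> density \<Rightarrow> real \<Rightarrow> real" where
  "cutoff_moment R y t = (LINT v:{0<..}|lborel. cutoff R v * y v t)"

lemma cutoff_moment_nonneg:
  "admissible_density P Psi y \<Longrightarrow> 0 \<le> t \<Longrightarrow> 0 \<le> cutoff_moment R y t"
  unfolding cutoff_moment_def
  by (intro set_integral_nonneg) (simp add: admissible_density_nonneg cutoff_nonneg)

lemma cutoff_moment_initial:
  assumes "admissible_density P Psi y"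
  shows "cutoff_moment R y 0 = 0"
proof -
  have "AE v in lborel. indicator {0<..} v *\<^sub>R (cutoff R v * y v 0) = 0"
    using assms by (auto simp: admissible_density_def indicator_def)
  then show ?thesis
    unfolding cutoff_moment_def set_lebesgue_integral_def by (rule integral_eq_zero_AE)
qed

locale lpmf_system =
  fixes P :: lpmf_params and m w :: density and Vmat Vcm Vcw Psi Vpol2 :: "real \<Rightarrow> real"
  assumes constants_ok: "lpmf_constants_ok P"
    and solution: "lpmf_solution P m w Vmat Vcm Vcw Psi Vpol2"
begin

abbreviation "Phi \<equiv> Phi_f P Vmat Psi"
abbreviation "Vp \<equiv> Vp_f P Vmat Vcm Vcw Psi"
abbreviation "g \<equiv> g_f P Vmat Vcm Vcw Psi"

abbreviation rate_m :: "(real \<Rightarrow> real) \<Rightarrow> real \<Rightarrow> real" where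
  "rate_m \<phi> t \<equiv> (LINT v:{0<..}|lborel. g v t * deriv \<phi> v * m v t) + eta0_f P Vmat Psi t * \<phi> (lc P)
     - lm P * (LINT v:{0<..}|lborel. \<phi> v * m v t) + coag_weak P Psi m \<phi> t"

abbreviation rate_w :: "(real \<Rightarrow> real) \<Rightarrow> real \<Rightarrow> real" where
  "rate_w \<phi> t \<equiv> (LINT v:{0<..}|lborel. g v t * deriv \<phi> v * w v t)
     + lm P * (LINT v:{0<..}|lborel. \<phi> v * m v t) + coag_weak P Psi w \<phi> t"

lemma constants_pos: "0 < pb P" "0 < la P" "0 < ld P" "0 < lm P" "0 < ln P" "0 < lp P"
    "0 < lpol1 P" "0 < Psir P" "0 < Phis P" "0 < Psibar P"
  using constants_ok unfolding lpmf_constants_ok_def by auto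

lemma admissible: "admissible_density P Psi m" "admissible_density P Psi w"
  using solution unfolding lpmf_solution_def by auto

lemma weak_equations:
  assumes "test_fun \<phi>" "0 \<le> t"
  shows "((\<lambda>s. LINT v:{0<..}|lborel. \<phi> v * m v s) has_real_derivative rate_m \<phi> t) (at t within {0..})"
    and "((\<lambda>s. LINT v:{0<..}|lborel. \<phi> v * w v s) has_real_derivative rate_w \<phi> t) (at t within {0..})"
  using solution assms unfolding lpmf_solution_def by (blast+)

lemma ODEs:
  shows Vmat_ODE: "\<forall>t\<ge>0. (Vmat has_real_derivative lp P * Psi t / Vp t * (Vmat t + lpol1 P)
      - Phi t * (lc P * ln P + ld P * Sigma_f P Psi m t + ld P * Sigma_f P Psi w t)) (at t within {0..})"
    and Vcm_ODE: "\<forall>t\<ge>0. (Vcm has_real_derivative lp P * Psi t / Vp t * Vcm t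
      + Phi t * (lc P * ln P + ld P * Sigma_f P Psi m t) - lm P * Vcm t) (at t within {0..})"
    and Vcw_ODE: "\<forall>t\<ge>0. (Vcw has_real_derivative lp P * Psi t / Vp t * Vcw t
      + ld P * Phi t * Sigma_f P Psi w t + lm P * Vcm t) (at t within {0..})"
    and Psi_ODE: "\<forall>t\<ge>0. (Psi has_real_derivative
      - lp P * (Psi t / (Psi t + 1)) * ((Psi t + Psir P) / (Vpol2 t + lpol1 P))) (at t within {0..})"
    and Vpol2_ODE: "\<forall>t\<ge>0. (Vpol2 has_real_derivative lp P * (Psi t / (Psi t + 1))) (at t within {0..})"
    and initial_values: "Vmat 0 = 0" "Vcm 0 = 0" "Vcw 0 = 0" "Vpol2 0 = 0" "Psi 0 = Psibar P"
  using solution unfolding lpmf_solution_def by (blast+)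

lemma Psi_pos: "0 \<le> t \<Longrightarrow> 0 < Psi t"
  by (rule ODE_decay_stays_pos[OF Psi_ODE Vpol2_ODE]) (use constants_pos initial_values in auto)

text \<open>The total volume \<open>Vmat + Vcm + Vcw\<close> has derivative \<open>lp \<Psi> / (\<Psi> + 1) \<ge> 0\<close>
  (or \<open>0\<close> where \<open>Vp = 0\<close>, by the convention \<open>x / 0 = 0\<close>), so it stays nonnegative.\<close>
lemma Vp_pos:
  assumes "0 \<le> t"
  shows "0 < Vp t"
proof -
  let ?S = "\<lambda>t. Vmat t + Vcm t + Vcw t"
  have dS: "\<forall>t\<ge>0. (?S has_real_derivative lp P * Psi t / Vp t * (?S t + lpol1 P)) (at t within {0..})"
  proof (intro allI impI)
    fix t :: real assume "0 \<le> t"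
    from DERIV_add[OF DERIV_add[OF Vmat_ODE[rule_format, OF this] Vcm_ODE[rule_format, OF this]]
        Vcw_ODE[rule_format, OF this]]
    show "(?S has_real_derivative lp P * Psi t / Vp t * (?S t + lpol1 P)) (at t within {0..})"
      by (rule DERIV_cong) (simp add: algebra_simps add_divide_distrib)
  qed
  have "?S 0 \<le> ?S t"
  proof (rule DERIV_within_nonneg_imp_increasing[OF dS order_refl assms])
    fix s :: real assume "0 < s"
    then have "0 \<le> lp P * Psi s / (Psi s + 1)"
      using Psi_pos[of s] constants_pos by simp
    then show "0 \<le> lp P * Psi s / Vp s * (?S s + lpol1 P)"
      by (cases "?S s + lpol1 P = 0") (simp_all add: Vp_f_def add.assoc)
  qed
  then show ?thesis
    using Psi_pos[OF assms] constants_pos initial_values by (simp add: Vp_f_def add.assoc add_pos_nonneg)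
qed

lemma Vmat_nonneg: "0 \<le> t \<Longrightarrow> 0 \<le> Vmat t"
proof (rule DERIV_within_barrier_nonneg[where c = "lpol1 P", OF Vmat_ODE])
  fix s :: real assume s: "0 < s" "- lpol1 P < Vmat s" "Vmat s < 0"
  have "Vmat s / ((Psi s + 1) * (Vmat s + lpol1 P)) < 0"
    using s Psi_pos[of s] by (intro divide_neg_pos) auto
  then have "Phi s = 0"
    using constants_pos by (simp add: Phi_f_def)
  moreover have "0 \<le> lp P * Psi s / Vp s * (Vmat s + lpol1 P)"
    using s Psi_pos[of s] Vp_pos[of s] constants_pos
    by (intro mult_nonneg_nonneg divide_nonneg_pos) auto
  ultimately show "0 \<le> lp P * Psi s / Vp s * (Vmat s + lpol1 P)
      - Phi s * (lc P * ln P + ld P * Sigma_f P Psi m s + ld P * Sigma_f P Psi w s)"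
    by simp
qed (use constants_pos initial_values in auto)

lemma Phi_le_1:
  assumes "0 \<le> t"
  shows "Phi t \<le> 1"
proof -
  have "1 * Vmat t \<le> (Psi t + 1) * (Vmat t + lpol1 P)"
    using Psi_pos[OF assms] Vmat_nonneg[OF assms] constants_pos by (intro mult_mono) auto
  moreover have "0 < (Psi t + 1) * (Vmat t + lpol1 P)"
    using Psi_pos[OF assms] Vmat_nonneg[OF assms] constants_pos by simp
  ultimately have "Vmat t / ((Psi t + 1) * (Vmat t + lpol1 P)) \<le> 1"
    by simp
  then show ?thesis
    using constants_pos by (simp add: Phi_f_def)
qed

lemma g_nonneg:
  assumes "0 \<le> t" "0 < v"
  shows "0 \<le> g v t"
  unfolding g_f_def Phi_f_def
  using assms Psi_pos[OF assms(1)] Vp_pos[OF assms(1)] constants_pos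
  by (intro add_nonneg_nonneg mult_nonneg_nonneg divide_nonneg_pos) auto

lemma growth_term_cutoff_nonpos:
  assumes "admissible_density P Psi y" "0 \<le> t"
  shows "(LINT v:{0<..}|lborel. g v t * deriv (cutoff R) v * y v t) \<le> 0"
proof (rule set_integral_nonpos)
  fix v :: real assume "v \<in> {0<..}"
  then have "0 \<le> g v t * y v t"
    using assms g_nonneg admissible_density_nonneg by simp
  then show "g v t * deriv (cutoff R) v * y v t \<le> 0"
    using dcutoff_nonpos[of R v] by (simp add: deriv_cutoff mult.commute mult.left_commute mult_nonpos_nonneg)
qed

lemma rate_m_cutoff_le:
  assumes "0 \<le> t" "0 < R"
  shows "rate_m (cutoff R) t \<le> ln P"
proof -
  have "Phi t * cutoff R (lc P) \<le> 1"
    using Phi_le_1[OF assms(1)] cutoff_le_1 cutoff_nonneg by (simp add: Phi_f_def mult_le_one)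
  then have "eta0_f P Vmat Psi t * cutoff R (lc P) \<le> ln P"
    using constants_pos by (simp add: eta0_f_def mult.assoc mult_left_le)
  moreover have "0 \<le> lm P * cutoff_moment R m t"
    using cutoff_moment_nonneg[OF admissible(1) assms(1)] constants_pos by simp
  ultimately show ?thesis
    using growth_term_cutoff_nonpos[OF admissible(1) assms(1), of R]
      coag_weak_cutoff_nonpos[OF admissible(1) constants_pos(2) assms]
    by (simp add: cutoff_moment_def)
qed

lemma rate_w_cutoff_le:
  assumes "0 \<le> t" "0 < R"
  shows "rate_w (cutoff R) t \<le> lm P * cutoff_moment R m t"
  using growth_term_cutoff_nonpos[OF admissible(2) assms(1), of R]
    coag_weak_cutoff_nonpos[OF admissible(2) constants_pos(2) assms]
  by (simp add: cutoff_moment_def)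

lemma cutoff_moment_m_le:
  assumes "0 \<le> t" "0 < R"
  shows "cutoff_moment R m t \<le> ln P * t"
proof (rule DERIV_within_le_imp_le[where f' = "rate_m (cutoff R)" and g' = "\<lambda>_. ln P", OF _ _ order_refl assms(1)])
  show "\<forall>t\<ge>0. (cutoff_moment R m has_real_derivative rate_m (cutoff R) t) (at t within {0..})"
    using weak_equations(1)[OF test_fun_cutoff] by (simp add: cutoff_moment_def[abs_def])
  show "\<forall>t\<ge>0. ((\<lambda>t. ln P * t) has_real_derivative ln P) (at t within {0..})"
    by (auto intro!: derivative_eq_intros)
  show "rate_m (cutoff R) s \<le> ln P" if "0 < s" for s
    using rate_m_cutoff_le[of s R] that assms by simp
  show "cutoff_moment R m 0 \<le> ln P * 0"
    by (simp add: cutoff_moment_initial[OF admissible(1)])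
qed

lemma cutoff_moment_w_le:
  assumes "0 \<le> t" "0 < R"
  shows "cutoff_moment R w t \<le> ln P * lm P / 2 * t\<^sup>2"
proof (rule DERIV_within_le_imp_le[where f' = "rate_w (cutoff R)" and g' = "\<lambda>t. ln P * lm P * t",
      OF _ _ order_refl assms(1)])
  show "\<forall>t\<ge>0. (cutoff_moment R w has_real_derivative rate_w (cutoff R) t) (at t within {0..})"
    using weak_equations(2)[OF test_fun_cutoff] by (simp add: cutoff_moment_def[abs_def])
  show "\<forall>t\<ge>0. ((\<lambda>t. ln P * lm P / 2 * t\<^sup>2) has_real_derivative ln P * lm P * t) (at t within {0..})"
    by (auto intro!: derivative_eq_intros)
  show "rate_w (cutoff R) s \<le> ln P * lm P * s" if "0 < s" for s
  proof -
    have "rate_w (cutoff R) s \<le> lm P * cutoff_moment R m s"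
      using rate_w_cutoff_le that assms by simp
    also have "\<dots> \<le> lm P * (ln P * s)"
      using cutoff_moment_m_le[of s R] that assms constants_pos by (intro mult_left_mono) auto
    finally show ?thesis
      by (simp add: mult_ac)
  qed
  show "cutoff_moment R w 0 \<le> ln P * lm P / 2 * 0\<^sup>2"
    by (simp add: cutoff_moment_initial[OF admissible(2)])
qed

end

theorem propositionC1:
  fixes P :: lpmf_params
    and m w :: "real \<Rightarrow> real \<Rightarrow> real"
    and Vmat Vcm Vcw Psi Vpol2 :: "real \<Rightarrow> real"
  assumes "lpmf_constants_ok P"
    and "lpmf_solution P m w Vmat Vcm Vcw Psi Vpol2"
  shows "\<forall>t\<ge>0.
           set_integrable lborel {0<..} (\<lambda>v. m v t)
         \<and> set_integrable lborel {0<..} (\<lambda>v. w v t)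
         \<and> set_lebesgue_integral lborel {0<..} (\<lambda>v. m v t) \<le> ln P * t
         \<and> set_lebesgue_integral lborel {0<..} (\<lambda>v. w v t) \<le> ln P * lm P / 2 * t\<^sup>2"
proof (intro allI impI)
  interpret lpmf_system P m w Vmat Vcm Vcw Psi Vpol2
    using assms by unfold_locales
  fix t :: real assume "0 \<le> t"
  have int: "set_integrable lborel {0<..} (\<lambda>v. m v t)" "set_integrable lborel {0<..} (\<lambda>v. w v t)"
    using admissible constants_pos \<open>0 \<le> t\<close> by (auto intro: set_integrable_admissible_density)
  moreover have "(LINT v:{0<..}|lborel. m v t) \<le> ln P * t"
    using cutoff_moment_m_le \<open>0 \<le> t\<close>
    by (intro set_integral_le_of_cutoff_bound[OF int(1)]) (simp add: cutoff_moment_def)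
  moreover have "(LINT v:{0<..}|lborel. w v t) \<le> ln P * lm P / 2 * t\<^sup>2"
    using cutoff_moment_w_le \<open>0 \<le> t\<close>
    by (intro set_integral_le_of_cutoff_bound[OF int(2)]) (simp add: cutoff_moment_def)
  ultimately show "set_integrable lborel {0<..} (\<lambda>v. m v t)
         \<and> set_integrable lborel {0<..} (\<lambda>v. w v t)
         \<and> set_lebesgue_integral lborel {0<..} (\<lambda>v. m v t) \<le> ln P * t
         \<and> set_lebesgue_integral lborel {0<..} (\<lambda>v. w v t) \<le> ln P * lm P / 2 * t\<^sup>2"
    by blast
qed

end
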